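(* Let $G$ be a graph and let $k,m\geq 1$ be integers. Then $k$ cops have a winning strategy on $G$ in the game against $m$ robbers if and only if $k$ cops have a winning strategy on $G$ in the game against a single robber.
   Context: All graphs are finite, simple, connected and reflexive (every vertex is considered adjacent to itself, so a player may stay in place). The game of $k$ cops and $m$ robbers on $G$: in round 0 the cops first choose starting vertices, then the robbers choose theirs. In each round $i\geq 1$, all $k$ cops move (each to an adjacent vertex or staying), then all $m$ robbers move likewise. Several players may occupy the same vertex. Whenever a cop and some robbers occupy the same vertex, those robbers are captured and take no further part in the game (robbers are captured one by one; they need not be captured simultaneously). Both sides have full information. The cops win if all robbers are captured after finitely many rounds; otherwise the robbers win. $G$ is $k$-cop-win if $k$ cops have a winning strategy against one robber; $1$-cop-win graphs are called cop-win. *)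

theory Defs
  imports Main
begin

text \<open>Finite simple connected graph on vertex set V with (irreflexive, symmetric)
  edge relation E.  Reflexivity (staying in place) is modelled by adj.\<close>

definition graph :: "'v set \<Rightarrow> ('v \<Rightarrow> 'v \<Rightarrow> bool) \<Rightarrow> bool" where
  "graph V E \<longleftrightarrow> finite V \<and> V \<noteq> {}
     \<and> (\<forall>u v. E u v \<longrightarrow> u \<in> V \<and> v \<in> V)
     \<and> (\<forall>u v. E u v \<longrightarrow> E v u)
     \<and> (\<forall>u. \<not> E u u)
     \<and> (\<forall>u\<in>V. \<forall>v\<in>V. (u, v) \<in> {(x, y). E x y}\<^sup>*)"

definition adj :: "('v \<Rightarrow> 'v \<Rightarrow> bool) \<Rightarrow> 'v \<Rightarrow> 'v \<Rightarrow> bool" where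
  "adj E u v \<longleftrightarrow> u = v \<or> E u v"

text \<open>A history is the list of completed rounds (cop positions, robber positions).
  A cop strategy maps the history to the cop positions of the next round (for the
  empty history: the initial placement). A robber strategy maps the history and the
  cops' current positions to the robbers' positions.\<close>

type_synonym 'v hist = "('v list \<times> 'v list) list"
type_synonym 'v cop_strat = "'v hist \<Rightarrow> 'v list"
type_synonym 'v rob_strat = "'v hist \<Rightarrow> 'v list \<Rightarrow> 'v list"

fun play :: "'v cop_strat \<Rightarrow> 'v rob_strat \<Rightarrow> nat \<Rightarrow> 'v hist" where
  "play \<sigma> \<tau> 0 = []"
| "play \<sigma> \<tau> (Suc i) = (let h = play \<sigma> \<tau> i; C = \<sigma> h in h @ [(C, \<tau> h C)])"

definition cpos :: "'v cop_strat \<Rightarrow> 'v rob_strat \<Rightarrow> nat \<Rightarrow> 'v list" where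
  "cpos \<sigma> \<tau> i = \<sigma> (play \<sigma> \<tau> i)"

definition rpos :: "'v cop_strat \<Rightarrow> 'v rob_strat \<Rightarrow> nat \<Rightarrow> 'v list" where
  "rpos \<sigma> \<tau> i = \<tau> (play \<sigma> \<tau> i) (cpos \<sigma> \<tau> i)"

text \<open>Robber j has been captured before the robbers' move of round t: at some
  earlier round s < t a cop shared its vertex, either after the robbers' move of
  round s or after the cops' move of round s+1.\<close>

definition caught_before :: "nat \<Rightarrow> 'v cop_strat \<Rightarrow> 'v rob_strat \<Rightarrow> nat \<Rightarrow> nat \<Rightarrow> bool" where
  "caught_before k \<sigma> \<tau> j t \<longleftrightarrow>
     (\<exists>s<t. \<exists>c<k. cpos \<sigma> \<tau> s ! c = rpos \<sigma> \<tau> s ! j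
                 \<or> cpos \<sigma> \<tau> (Suc s) ! c = rpos \<sigma> \<tau> s ! j)"

definition cops_legal ::
  "'v set \<Rightarrow> ('v \<Rightarrow> 'v \<Rightarrow> bool) \<Rightarrow> nat \<Rightarrow> 'v cop_strat \<Rightarrow> 'v rob_strat \<Rightarrow> bool" where
  "cops_legal V E k \<sigma> \<tau> \<longleftrightarrow>
     (\<forall>i. length (cpos \<sigma> \<tau> i) = k \<and> set (cpos \<sigma> \<tau> i) \<subseteq> V
        \<and> (\<forall>c<k. adj E (cpos \<sigma> \<tau> i ! c) (cpos \<sigma> \<tau> (Suc i) ! c)))"

text \<open>Robbers move along edges (or stay); captured robbers take no further part,
  i.e. they stay where they are.\<close>

definition robbers_legal ::
  "'v set \<Rightarrow> ('v \<Rightarrow> 'v \<Rightarrow> bool) \<Rightarrow> nat \<Rightarrow> nat \<Rightarrow> 'v cop_strat \<Rightarrow> 'v rob_strat \<Rightarrow> bool" where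
  "robbers_legal V E k m \<sigma> \<tau> \<longleftrightarrow>
     (\<forall>i. length (rpos \<sigma> \<tau> i) = m \<and> set (rpos \<sigma> \<tau> i) \<subseteq> V
        \<and> (\<forall>j<m. adj E (rpos \<sigma> \<tau> i ! j) (rpos \<sigma> \<tau> (Suc i) ! j)
                 \<and> (caught_before k \<sigma> \<tau> j (Suc i) \<longrightarrow> rpos \<sigma> \<tau> (Suc i) ! j = rpos \<sigma> \<tau> i ! j)))"

definition cops_win :: "'v set \<Rightarrow> ('v \<Rightarrow> 'v \<Rightarrow> bool) \<Rightarrow> nat \<Rightarrow> nat \<Rightarrow> bool" where
  "cops_win V E k m \<longleftrightarrow>
     (\<exists>\<sigma>. \<forall>\<tau>. robbers_legal V E k m \<sigma> \<tau> \<longrightarrow>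
           cops_legal V E k \<sigma> \<tau> \<and> (\<exists>t. \<forall>j<m. caught_before k \<sigma> \<tau> j t))"

end

theory Submission
  imports Defs
begin

text \<open>
  Several robbers are no harder to catch than one: a team of k cops that beats each single robber
  with a strategy \<sigma> can hunt the m robbers one after another. The cops play \<sigma> against one robber
  that is still at large, ignoring the others, until it is caught; then they walk back along
  shortest paths to the start position of \<sigma> and restart \<sigma> against the next one. The robber being
  chased behaves like a legal single robber towards \<sigma>, so every chase ends with a capture, and every
  return ends because the total distance to the start position decreases. Conversely, cops beating
  m robbers beat one robber, who can be treated as m robbers sharing a vertex.
\<close>

declare play.simps(2) [simp del]

lemma play_Suc_conv:
  "play \<sigma> \<tau> (Suc n) = play \<sigma> \<tau> n @ [(cpos \<sigma> \<tau> n, rpos \<sigma> \<tau> n)]"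
  by (simp add: play.simps(2) cpos_def rpos_def Let_def)

lemma play_conv_map: "play \<sigma> \<tau> n = map (\<lambda>s. (cpos \<sigma> \<tau> s, rpos \<sigma> \<tau> s)) [0..<n]"
  by (induction n) (simp_all only: play_Suc_conv play.simps(1) upt_Suc map_append, simp_all)

lemma length_play [simp]: "length (play \<sigma> \<tau> n) = n"
  by (simp add: play_conv_map)

lemma last_play_Suc: "last (play \<sigma> \<tau> (Suc n)) = (cpos \<sigma> \<tau> n, rpos \<sigma> \<tau> n)"
  by (simp add: play_Suc_conv)

lemma nth_play: "s < n \<Longrightarrow> play \<sigma> \<tau> n ! s = (cpos \<sigma> \<tau> s, rpos \<sigma> \<tau> s)"
  by (simp add: play_conv_map del: upt_Suc)

lemma play_eqI:
  assumes "\<And>i. i < n \<Longrightarrow> \<sigma> (map (\<lambda>s. (C s, R s)) [0..<i]) = C i"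
    and "\<And>i. i < n \<Longrightarrow> \<tau> (map (\<lambda>s. (C s, R s)) [0..<i]) (C i) = R i"
  shows "play \<sigma> \<tau> n = map (\<lambda>s. (C s, R s)) [0..<n]"
  using assms by (induction n) (auto simp: play.simps(2) Let_def)

lemma cpos_rpos_eqI:
  assumes "\<And>i. i < n \<Longrightarrow> \<sigma> (map (\<lambda>s. (C s, R s)) [0..<i]) = C i"
    and "\<And>i. i < n \<Longrightarrow> \<tau> (map (\<lambda>s. (C s, R s)) [0..<i]) (C i) = R i"
    and "i < n"
  shows "cpos \<sigma> \<tau> i = C i \<and> rpos \<sigma> \<tau> i = R i"
proof -
  have "play \<sigma> \<tau> i = map (\<lambda>s. (C s, R s)) [0..<i]"
    using assms by (intro play_eqI) auto
  then show ?thesis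
    using assms by (simp add: cpos_def rpos_def)
qed

lemma caught_before_mono:
  "caught_before k \<sigma> \<tau> j t \<Longrightarrow> t \<le> t' \<Longrightarrow> caught_before k \<sigma> \<tau> j t'"
  unfolding caught_before_def by (meson less_le_trans)

definition trajectory :: "(nat \<Rightarrow> 'v) \<Rightarrow> 'v rob_strat" where
  "trajectory r h C = [r (length h)]"

lemma rpos_trajectory [simp]: "rpos \<sigma> (trajectory r) i = [r i]"
  by (simp add: rpos_def trajectory_def)

lemma robbers_legal_trajectory:
  "robbers_legal V E k 1 \<sigma> (trajectory r) \<longleftrightarrow>
     (\<forall>i. r i \<in> V \<and> adj E (r i) (r (Suc i))
        \<and> (caught_before k \<sigma> (trajectory r) 0 (Suc i) \<longrightarrow> r (Suc i) = r i))"
  by (simp add: robbers_legal_def)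

definition robber_copies :: "nat \<Rightarrow> 'v hist \<Rightarrow> 'v hist" where
  "robber_copies m = map (\<lambda>(C, R). (C, replicate m (hd R)))"

definition first_robber :: "'v hist \<Rightarrow> 'v hist" where
  "first_robber = map (\<lambda>(C, R). (C, [hd R]))"

lemma play_robber_copies:
  fixes \<sigma> :: "'v cop_strat" and \<tau> :: "'v rob_strat"
  assumes "1 \<le> m" and single: "\<And>i. length (rpos (\<sigma> \<circ> robber_copies m) \<tau> i) = 1"
  defines "\<tau>m \<equiv> \<lambda>h C. replicate m (hd (\<tau> (first_robber h) C))"
  shows "cpos \<sigma> \<tau>m i = cpos (\<sigma> \<circ> robber_copies m) \<tau> i
    \<and> rpos \<sigma> \<tau>m i = replicate m (hd (rpos (\<sigma> \<circ> robber_copies m) \<tau> i))"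
proof (rule cpos_rpos_eqI[of "Suc i"])
  let ?\<sigma>1 = "\<sigma> \<circ> robber_copies m" and ?r = "\<lambda>s. hd (rpos (\<sigma> \<circ> robber_copies m) \<tau> s)"
  fix i
  show "\<sigma> (map (\<lambda>s. (cpos ?\<sigma>1 \<tau> s, replicate m (?r s))) [0..<i]) = cpos ?\<sigma>1 \<tau> i"
    unfolding cpos_def[of ?\<sigma>1 \<tau> i] by (simp add: robber_copies_def play_conv_map comp_def)
  have "[?r s] = rpos ?\<sigma>1 \<tau> s" for s
    using single[of s] by (cases "rpos ?\<sigma>1 \<tau> s") simp_all
  then have "first_robber (map (\<lambda>s. (cpos ?\<sigma>1 \<tau> s, replicate m (?r s))) [0..<i]) = play ?\<sigma>1 \<tau> i"
    using assms(1) by (simp add: first_robber_def play_conv_map hd_replicate)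
  then show "\<tau>m (map (\<lambda>s. (cpos ?\<sigma>1 \<tau> s, replicate m (?r s))) [0..<i]) (cpos ?\<sigma>1 \<tau> i)
      = replicate m (?r i)"
    unfolding rpos_def[of ?\<sigma>1 \<tau> i] by (simp add: \<tau>m_def)
qed simp

lemma cops_win_one_if_cops_win:
  assumes "1 \<le> m" and "cops_win V E k m"
  shows "cops_win V E k 1"
proof -
  obtain \<sigma> where win: "\<And>\<tau>. robbers_legal V E k m \<sigma> \<tau> \<Longrightarrow>
      cops_legal V E k \<sigma> \<tau> \<and> (\<exists>t. \<forall>j<m. caught_before k \<sigma> \<tau> j t)"
    using assms(2) unfolding cops_win_def by blast
  have "cops_legal V E k (\<sigma> \<circ> robber_copies m) \<tau> \<and> (\<exists>t. \<forall>j<1. caught_before k (\<sigma> \<circ> robber_copies m) \<tau> j t)"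
    if legal: "robbers_legal V E k 1 (\<sigma> \<circ> robber_copies m) \<tau>" for \<tau>
  proof -
    let ?\<sigma>1 = "\<sigma> \<circ> robber_copies m" and ?\<tau>m = "\<lambda>h C. replicate m (hd (\<tau> (first_robber h) C))"
    have single: "length (rpos ?\<sigma>1 \<tau> i) = 1" and "set (rpos ?\<sigma>1 \<tau> i) \<subseteq> V" for i
      using legal unfolding robbers_legal_def by blast+
    note same_play = play_robber_copies[OF assms(1) single]
    have nth0: "rpos ?\<sigma>1 \<tau> i ! 0 = hd (rpos ?\<sigma>1 \<tau> i)" and in_V: "hd (rpos ?\<sigma>1 \<tau> i) \<in> V" for i
      using single[of i] \<open>set (rpos ?\<sigma>1 \<tau> i) \<subseteq> V\<close>
      by (cases "rpos ?\<sigma>1 \<tau> i"; simp)+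
    have caught: "caught_before k \<sigma> ?\<tau>m j t \<longleftrightarrow> caught_before k ?\<sigma>1 \<tau> 0 t" if "j < m" for j t
      using that by (simp add: caught_before_def same_play nth0)
    have "robbers_legal V E k m \<sigma> ?\<tau>m"
      using legal assms(1) unfolding robbers_legal_def
      by (simp add: same_play nth0 caught in_V set_replicate_conv_if)
    with win have legal_m: "cops_legal V E k \<sigma> ?\<tau>m" and "\<exists>t. \<forall>j<m. caught_before k \<sigma> ?\<tau>m j t"
      by blast+
    then obtain t where "caught_before k \<sigma> ?\<tau>m 0 t"
      using assms(1) by auto
    with legal_m assms(1) show ?thesis
      by (auto simp: cops_legal_def same_play caught)
  qed
  then show ?thesis
    unfolding cops_win_def by blast
qed

definition graph_dist :: "('v \<Rightarrow> 'v \<Rightarrow> bool) \<Rightarrow> 'v \<Rightarrow> 'v \<Rightarrow> nat" where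
  "graph_dist E u v = (LEAST n. (u, v) \<in> {(x, y). E x y} ^^ n)"

definition step_towards :: "('v \<Rightarrow> 'v \<Rightarrow> bool) \<Rightarrow> 'v \<Rightarrow> 'v \<Rightarrow> 'v" where
  "step_towards E u v =
     (if u = v then u else SOME w. E u w \<and> graph_dist E w v < graph_dist E u v)"

lemma graph_dist_relpow:
  assumes "graph V E" "u \<in> V" "v \<in> V"
  shows "(u, v) \<in> {(x, y). E x y} ^^ graph_dist E u v"
proof -
  have "(u, v) \<in> {(x, y). E x y}\<^sup>*"
    using assms by (simp add: graph_def)
  then obtain n where "(u, v) \<in> {(x, y). E x y} ^^ n"
    using rtrancl_power by blast
  then show ?thesis
    unfolding graph_dist_def by (rule LeastI)
qed

lemma step_towards_decreases:
  assumes "graph V E" "u \<in> V" "v \<in> V" "u \<noteq> v"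
  shows "E u (step_towards E u v) \<and> graph_dist E (step_towards E u v) v < graph_dist E u v"
proof -
  have path: "(u, v) \<in> {(x, y). E x y} ^^ graph_dist E u v"
    using graph_dist_relpow[OF assms(1-3)] .
  with assms(4) obtain n where n: "graph_dist E u v = Suc n"
    by (cases "graph_dist E u v") auto
  with path obtain w where "E u w" and "(w, v) \<in> {(x, y). E x y} ^^ n"
    using relpow_Suc_D2 by fastforce
  moreover from this(2) have "graph_dist E w v \<le> n"
    unfolding graph_dist_def by (rule Least_le)
  ultimately have "\<exists>w. E u w \<and> graph_dist E w v < graph_dist E u v"
    using n by auto
  from someI_ex[OF this] show ?thesis
    unfolding step_towards_def using assms(4) by simp
qed

lemma step_towards_adj:
  assumes "graph V E" "u \<in> V" "v \<in> V"
  shows "adj E u (step_towards E u v) \<and> step_towards E u v \<in> V"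
  using assms step_towards_decreases[OF assms]
  by (cases "u = v") (auto simp: adj_def step_towards_def graph_def)

lemma step_towards_dist_le:
  assumes "graph V E" "u \<in> V" "v \<in> V"
  shows "graph_dist E (step_towards E u v) v \<le> graph_dist E u v"
  using step_towards_decreases[OF assms]
  by (cases "u = v") (auto simp: step_towards_def)

text \<open>
  In phase \<^term>\<open>Chasing j T\<close> the cops play \<sigma> against robber j alone, with \<sigma> restarted at
  round T, when all cops stood on the start position \<^term>\<open>\<sigma> []\<close>.
\<close>

datatype phase = Chasing nat nat | Returning

definition caught_in :: "nat \<Rightarrow> nat \<Rightarrow> 'v hist \<Rightarrow> bool" where
  "caught_in k j h \<longleftrightarrow> (\<exists>s c. Suc s < length h \<and> c < k \<and>
     (fst (h ! s) ! c = snd (h ! s) ! j \<or> fst (h ! Suc s) ! c = snd (h ! s) ! j))"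

lemma caught_in_play: "caught_in k j (play \<sigma> \<tau> (Suc n)) \<longleftrightarrow> caught_before k \<sigma> \<tau> j n"
  unfolding caught_in_def caught_before_def by (auto simp: nth_play cong: conj_cong)

definition next_phase :: "nat \<Rightarrow> nat \<Rightarrow> 'v list \<Rightarrow> phase \<Rightarrow> 'v hist \<Rightarrow> phase" where
  "next_phase k m P ph h = (case ph of
     Chasing j T \<Rightarrow> if caught_in k j h then Returning else Chasing j T
   | Returning \<Rightarrow>
       if fst (last h) = P \<and> (\<exists>j<m. \<not> caught_in k j h)
       then Chasing (LEAST j. j < m \<and> \<not> caught_in k j h) (length h) else Returning)"

fun phase_rev :: "nat \<Rightarrow> nat \<Rightarrow> 'v list \<Rightarrow> 'v hist \<Rightarrow> phase" where
  "phase_rev k m P [] = Chasing 0 0"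
| "phase_rev k m P (r # rh) = next_phase k m P (phase_rev k m P rh) (rev (r # rh))"

definition phase_of :: "nat \<Rightarrow> nat \<Rightarrow> 'v list \<Rightarrow> 'v hist \<Rightarrow> phase" where
  "phase_of k m P h = phase_rev k m P (rev h)"

lemma phase_of_Nil [simp]: "phase_of k m P [] = Chasing 0 0"
  by (simp add: phase_of_def)

lemma phase_of_snoc [simp]:
  "phase_of k m P (h @ [r]) = next_phase k m P (phase_of k m P h) (h @ [r])"
  by (simp add: phase_of_def)

definition sequential_strategy ::
  "('v \<Rightarrow> 'v \<Rightarrow> bool) \<Rightarrow> 'v cop_strat \<Rightarrow> nat \<Rightarrow> nat \<Rightarrow> 'v cop_strat" where
  "sequential_strategy E \<sigma> k m h = (case phase_of k m (\<sigma> []) h of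
     Chasing j T \<Rightarrow> \<sigma> (map (\<lambda>(C, R). (C, [R ! j])) (drop T h))
   | Returning \<Rightarrow> map (\<lambda>c. step_towards E (fst (last h) ! c) (\<sigma> [] ! c)) [0..<k])"

locale sequential_chase =
  fixes V :: "'v set" and E :: "'v \<Rightarrow> 'v \<Rightarrow> bool" and k m :: nat
    and \<sigma> :: "'v cop_strat" and \<tau> :: "'v rob_strat"
  assumes graph: "graph V E" and m_pos: "1 \<le> m"
    and \<sigma>_wins: "\<And>\<tau>'. robbers_legal V E k 1 \<sigma> \<tau>' \<Longrightarrow>
        cops_legal V E k \<sigma> \<tau>' \<and> (\<exists>t. caught_before k \<sigma> \<tau>' 0 t)"
    and robbers_legal: "robbers_legal V E k m (sequential_strategy E \<sigma> k m) \<tau>"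
begin

abbreviation "S \<equiv> sequential_strategy E \<sigma> k m"
abbreviation "P \<equiv> \<sigma> []"
abbreviation "cp \<equiv> cpos S \<tau>"
abbreviation "rp \<equiv> rpos S \<tau>"
abbreviation "ph n \<equiv> phase_of k m P (play S \<tau> n)"
abbreviation "at_large n \<equiv> {j. j < m \<and> \<not> caught_before k S \<tau> j n}"
abbreviation "shadow j T \<equiv> trajectory (\<lambda>i. rp (T + i) ! j)"

lemma ph_0: "ph 0 = Chasing 0 0"
  by simp

lemma ph_Suc: "ph (Suc n) = next_phase k m P (ph n) (play S \<tau> (Suc n))"
  by (simp only: play_Suc_conv phase_of_snoc)

lemma ph_Suc_Chasing:
  "ph n = Chasing j T \<Longrightarrow> ph (Suc n) = (if caught_before k S \<tau> j n then Returning else Chasing j T)"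
  by (simp add: ph_Suc next_phase_def caught_in_play)

lemma ph_Suc_Returning:
  "ph n = Returning \<Longrightarrow> ph (Suc n) =
     (if cp n = P \<and> at_large n \<noteq> {} then Chasing (LEAST j. j \<in> at_large n) (Suc n) else Returning)"
  by (simp add: ph_Suc next_phase_def caught_in_play last_play_Suc)

lemma cp_Chasing:
  assumes "ph n = Chasing j T" and "T \<le> n"
  shows "cp n = \<sigma> (map (\<lambda>s. (cp (T + s), [rp (T + s) ! j])) [0..<n - T])"
proof -
  have "[T..<n] = map (\<lambda>s. s + T) [0..<n - T]"
    using assms(2) by (simp add: map_add_upt)
  then have "drop T (play S \<tau> n) = map (\<lambda>s. (cp (T + s), rp (T + s))) [0..<n - T]"
    by (simp add: play_conv_map drop_map add.commute)
  then show ?thesis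
    using assms(1) by (simp add: cpos_def[of S \<tau> n] sequential_strategy_def comp_def)
qed

lemma cp_Returning:
  "ph (Suc n) = Returning \<Longrightarrow> cp (Suc n) = map (\<lambda>c. step_towards E (cp n ! c) (P ! c)) [0..<k]"
  by (simp add: cpos_def[of S \<tau> "Suc n"] sequential_strategy_def play_Suc_conv)

lemma Chasing_invariant:
  "ph n = Chasing j T \<Longrightarrow>
     j < m \<and> T \<le> n \<and> (\<forall>l. T \<le> l \<and> l \<le> n \<longrightarrow> ph l = Chasing j T) \<and> (0 < T \<longrightarrow> cp (T - 1) = P)"
proof (induction n arbitrary: j T)
  case 0
  then show ?case
    using m_pos by simp
next
  case (Suc n)
  show ?case
  proof (cases "ph n")
    case (Chasing j' T')
    with Suc.prems have "j' = j" "T' = T"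
      by (simp_all add: ph_Suc_Chasing split: if_splits)
    with Suc.IH[OF Chasing] Suc.prems show ?thesis
      by (auto simp: le_Suc_eq)
  next
    case Returning
    with Suc.prems have "cp n = P \<and> T = Suc n \<and> j = (LEAST j. j \<in> at_large n) \<and> at_large n \<noteq> {}"
      by (auto simp: ph_Suc_Returning split: if_splits)
    moreover from this have "j \<in> at_large n"
      using LeastI_ex[of "\<lambda>j. j \<in> at_large n"] by blast
    ultimately show ?thesis
      using Suc.prems by auto
  qed
qed

lemma Chasing_until_caught:
  assumes "ph T = Chasing j T"
  shows "ph (T + i) = Chasing j T \<or> (\<exists>l. T < l \<and> l \<le> T + i \<and> ph l = Returning \<and> caught_before k S \<tau> j l)"
proof (induction i)
  case 0
  then show ?case
    using assms by simp
next
  case (Suc i)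
  then show ?case
  proof
    assume "ph (T + i) = Chasing j T"
    then show ?thesis
      using ph_Suc_Chasing[of "T + i"] caught_before_mono[of k S \<tau> j "T + i"] by force
  qed force
qed

lemma shadow_agrees:
  assumes "ph (T + i) = Chasing j T" and "s \<le> i"
  shows "cpos \<sigma> (shadow j T) s = cp (T + s)"
proof -
  have "ph (T + s') = Chasing j T" if "s' \<le> i" for s'
    using Chasing_invariant[OF assms(1)] that by simp
  then have "cpos \<sigma> (shadow j T) s = cp (T + s) \<and> rpos \<sigma> (shadow j T) s = [rp (T + s) ! j]"
    using assms(2) by (intro cpos_rpos_eqI[of "Suc i"]) (simp_all add: cp_Chasing trajectory_def)
  then show ?thesis ..
qed

lemma shadow_capture:
  assumes "ph (T + t) = Chasing j T" and "caught_before k \<sigma> (shadow j T) 0 t"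
  shows "caught_before k S \<tau> j (T + t)"
proof -
  obtain s c where "s < t" "c < k"
    and "cpos \<sigma> (shadow j T) s ! c = rp (T + s) ! j \<or> cpos \<sigma> (shadow j T) (Suc s) ! c = rp (T + s) ! j"
    using assms(2) unfolding caught_before_def by auto
  moreover have "cpos \<sigma> (shadow j T) s = cp (T + s)" "cpos \<sigma> (shadow j T) (Suc s) = cp (T + Suc s)"
    using shadow_agrees[OF assms(1)] \<open>s < t\<close> by simp_all
  ultimately show ?thesis
    unfolding caught_before_def by (intro exI[of _ "T + s"]) auto
qed

text \<open>
  Once the chase of robber j ends, robber j has been caught and stands still, so the shadow
  robber remains legal forever, not only while the chase lasts.
\<close>

lemma shadow_legal:
  assumes "ph T = Chasing j T"
  shows "robbers_legal V E k 1 \<sigma> (shadow j T)"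
  unfolding robbers_legal_trajectory
proof (intro allI conjI impI)
  fix i
  have "j < m"
    using Chasing_invariant[OF assms] by simp
  then show "rp (T + i) ! j \<in> V" and "adj E (rp (T + i) ! j) (rp (T + Suc i) ! j)"
    using robbers_legal unfolding robbers_legal_def by (metis nth_mem subsetD, simp)
  assume caught: "caught_before k \<sigma> (shadow j T) 0 (Suc i)"
  have "caught_before k S \<tau> j (T + Suc i)"
    using Chasing_until_caught[OF assms, of "Suc i"]
  proof
    assume "ph (T + Suc i) = Chasing j T"
    then show ?thesis
      using shadow_capture caught by blast
  qed (blast intro: caught_before_mono)
  with \<open>j < m\<close> show "rp (T + Suc i) ! j = rp (T + i) ! j"
    using robbers_legal unfolding robbers_legal_def by simp
qed

lemma \<sigma>_wins_shadow:
  assumes "ph T = Chasing j T"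
  shows "cops_legal V E k \<sigma> (shadow j T) \<and> (\<exists>t. caught_before k \<sigma> (shadow j T) 0 t)"
  using \<sigma>_wins[OF shadow_legal[OF assms]] .

lemma Chasing_ends:
  assumes "ph T = Chasing j T"
  shows "\<exists>l>T. ph l = Returning \<and> caught_before k S \<tau> j l"
proof -
  obtain t where caught: "caught_before k \<sigma> (shadow j T) 0 t"
    using \<sigma>_wins_shadow[OF assms] by blast
  show ?thesis
    using Chasing_until_caught[OF assms, of t]
  proof
    assume "ph (T + t) = Chasing j T"
    moreover from this have "caught_before k S \<tau> j (T + t)"
      using shadow_capture caught by blast
    ultimately show ?thesis
      by (intro exI[of _ "Suc (T + t)"]) (auto simp: ph_Suc_Chasing intro: caught_before_mono)
  qed auto
qed

lemma start_legal: "length P = k \<and> set P \<subseteq> V"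
proof -
  obtain v where "v \<in> V"
    using graph unfolding graph_def by blast
  then have "robbers_legal V E k 1 \<sigma> (trajectory (\<lambda>_. v))"
    unfolding robbers_legal_trajectory by (simp add: adj_def)
  then have "cops_legal V E k \<sigma> (trajectory (\<lambda>_. v))"
    using \<sigma>_wins by blast
  then show ?thesis
    unfolding cops_legal_def by (metis cpos_def play.simps(1))
qed

lemma cp_eq_shadow:
  assumes "ph n = Chasing j T"
  shows "cp n = cpos \<sigma> (shadow j T) (n - T)"
  using shadow_agrees[of T "n - T" j "n - T"] assms Chasing_invariant[OF assms] by simp

lemma cp_legal: "length (cp n) = k \<and> set (cp n) \<subseteq> V"
proof (induction n)
  case 0
  have "cp 0 = P"
    using cp_Chasing[OF ph_0] by simp
  then show ?case
    using start_legal by simp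
next
  case (Suc n)
  show ?case
  proof (cases "ph (Suc n)")
    case (Chasing j T)
    then have "ph T = Chasing j T"
      using Chasing_invariant by blast
    then show ?thesis
      using \<sigma>_wins_shadow cp_eq_shadow[OF Chasing] unfolding cops_legal_def by metis
  next
    case Returning
    have "step_towards E (cp n ! c) (P ! c) \<in> V" if "c < k" for c
      using step_towards_adj[OF graph] Suc.IH start_legal that by (metis nth_mem subsetD)
    then show ?thesis
      by (auto simp: cp_Returning[OF Returning])
  qed
qed

lemma cp_adj:
  assumes "c < k"
  shows "adj E (cp n ! c) (cp (Suc n) ! c)"
proof (cases "ph (Suc n)")
  case (Chasing j T)
  note inv = Chasing_invariant[OF Chasing]
  show ?thesis
  proof (cases "T = Suc n")
    case True
    then have "cp n = P" and "cp (Suc n) = P"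
      using inv cp_Chasing[OF Chasing] by simp_all
    then show ?thesis
      by (simp add: adj_def)
  next
    case False
    with inv have "ph n = Chasing j T" and "ph T = Chasing j T" and "T \<le> n"
      by auto
    then have "cp n = cpos \<sigma> (shadow j T) (n - T)" and "cp (Suc n) = cpos \<sigma> (shadow j T) (Suc (n - T))"
      using cp_eq_shadow Chasing by (simp_all add: Suc_diff_le)
    with \<sigma>_wins_shadow[OF \<open>ph T = Chasing j T\<close>] assms show ?thesis
      unfolding cops_legal_def by simp
  qed
next
  case Returning
  have "cp n ! c \<in> V" "P ! c \<in> V"
    using cp_legal start_legal assms by (metis nth_mem subsetD)+
  then show ?thesis
    using cp_Returning[OF Returning] step_towards_adj[OF graph] assms by simp
qed

lemma sequential_strategy_legal: "cops_legal V E k S \<tau>"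
  unfolding cops_legal_def using cp_legal cp_adj by blast

lemma Returning_reaches_start:
  "ph n = Returning \<Longrightarrow> \<exists>n'\<ge>n. ph n' = Returning \<and> cp n' = P"
proof (induction "\<Sum>c<k. graph_dist E (cp n ! c) (P ! c)" arbitrary: n rule: less_induct)
  case less
  show ?case
  proof (cases "cp n = P")
    case True
    with less.prems show ?thesis
      by auto
  next
    case False
    then have Returning: "ph (Suc n) = Returning"
      using ph_Suc_Returning[OF less.prems] by simp
    have in_V: "cp n ! c \<in> V" "P ! c \<in> V" if "c < k" for c
      using cp_legal start_legal that by (metis nth_mem subsetD)+
    obtain c0 where "c0 < k" "cp n ! c0 \<noteq> P ! c0"
      using False cp_legal start_legal by (metis nth_equalityI)
    then have "graph_dist E (cp (Suc n) ! c0) (P ! c0) < graph_dist E (cp n ! c0) (P ! c0)"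
      using step_towards_decreases[OF graph in_V] by (simp add: cp_Returning[OF Returning])
    moreover have "graph_dist E (cp (Suc n) ! c) (P ! c) \<le> graph_dist E (cp n ! c) (P ! c)" if "c < k" for c
      using step_towards_dist_le[OF graph in_V[OF that]] that by (simp add: cp_Returning[OF Returning])
    ultimately have "(\<Sum>c<k. graph_dist E (cp (Suc n) ! c) (P ! c)) < (\<Sum>c<k. graph_dist E (cp n ! c) (P ! c))"
      using \<open>c0 < k\<close> by (intro sum_strict_mono_ex1) auto
    with less.hyps[OF _ Returning] show ?thesis
      by (metis Suc_leD)
  qed
qed

lemma Returning_all_caught: "ph n = Returning \<Longrightarrow> \<exists>t. at_large t = {}"
proof (induction "card (at_large n)" arbitrary: n rule: less_induct)
  case less
  obtain n1 where "n \<le> n1" and n1: "ph n1 = Returning" "cp n1 = P"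
    using Returning_reaches_start[OF less.prems] by blast
  show ?case
  proof (cases "at_large n1 = {}")
    case False
    define j where "j = (LEAST j. j \<in> at_large n1)"
    have "j \<in> at_large n1"
      unfolding j_def by (rule LeastI_ex) (use False in blast)
    have "ph (Suc n1) = Chasing j (Suc n1)"
      using ph_Suc_Returning[OF n1(1)] n1(2) False by (simp add: j_def)
    then obtain l where "Suc n1 < l" "ph l = Returning" "caught_before k S \<tau> j l"
      using Chasing_ends by blast
    then have "at_large l \<subset> at_large n"
      using \<open>n \<le> n1\<close> \<open>j \<in> at_large n1\<close> by (auto intro: caught_before_mono)
    then have "card (at_large l) < card (at_large n)"
      by (intro psubset_card_mono) auto
    with less.hyps \<open>ph l = Returning\<close> show ?thesis
      by blast
  qed blast
qed

lemma sequential_strategy_catches_all: "\<exists>t. \<forall>j<m. caught_before k S \<tau> j t"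
proof -
  obtain l where "ph l = Returning"
    using Chasing_ends[of 0 0] by auto
  then show ?thesis
    using Returning_all_caught by blast
qed

end

lemma cops_win_if_cops_win_one:
  assumes "graph V E" and "1 \<le> m" and "cops_win V E k 1"
  shows "cops_win V E k m"
proof -
  obtain \<sigma> where "\<And>\<tau>. robbers_legal V E k 1 \<sigma> \<tau> \<Longrightarrow>
      cops_legal V E k \<sigma> \<tau> \<and> (\<exists>t. caught_before k \<sigma> \<tau> 0 t)"
    using assms(3) unfolding cops_win_def by auto
  then have "sequential_chase V E k m \<sigma> \<tau>" if "robbers_legal V E k m (sequential_strategy E \<sigma> k m) \<tau>" for \<tau>
    using assms that by unfold_locales
  then show ?thesis
    unfolding cops_win_def
    using sequential_chase.sequential_strategy_legal sequential_chase.sequential_strategy_catches_all by blast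
qed

theorem mainTheorem1:
  fixes V :: "'v set" and E :: "'v \<Rightarrow> 'v \<Rightarrow> bool" and k m :: nat
  assumes "graph V E" and "k \<ge> 1" and "m \<ge> 1"
  shows "cops_win V E k m \<longleftrightarrow> cops_win V E k 1"
  using cops_win_one_if_cops_win cops_win_if_cops_win_one assms by blast

end
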